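(* Let $R\subseteq\mathbb{Q}_{>0}\setminus\{1\}$ be non-empty. If $\omega(G(R))=\infty$ (i.e. $G(R)$ contains cliques of every finite size), then $R$ is a set of (measurable) multiplicative recurrence.
   Context: $G(R)$ is the graph with vertex set $\mathbb{N}=\{1,2,\dots\}$ and edge set $\{\{m,n\}: m/n\in R\}$; $\omega$ denotes the clique number. A set $R\subseteq \mathbb{Q}_{>0}\setminus\{1\}$ is a set of (measurable) multiplicative recurrence if for every measure-preserving action $T=(T_n)_{n\in\mathbb{N}}$ of the semigroup $(\mathbb{N},\times)$ on a probability space $(X,\mathcal{B},\mu)$ (each $T_n$ measure-preserving, $T_{mn}=T_m\circ T_n$) and every $B\in\mathcal{B}$ with $\mu(B)>0$, there exist $m,n\in\mathbb{N}$ with $m/n\in R$ and $\mu(T_m^{-1}B\cap T_n^{-1}B)>0$. *)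

theory Defs
  imports "HOL-Probability.Probability"
begin

text \<open>Edges of G(R): vertices are positive naturals, {m,n} is an edge iff m/n in R
  (the edge set is unordered, so either orientation of the quotient may lie in R).\<close>
definition GR_edge :: "rat set \<Rightarrow> nat \<Rightarrow> nat \<Rightarrow> bool" where
  "GR_edge R m n \<longleftrightarrow> of_nat m / of_nat n \<in> R \<or> of_nat n / of_nat m \<in> R"

definition GR_clique :: "rat set \<Rightarrow> nat set \<Rightarrow> bool" where
  "GR_clique R C \<longleftrightarrow> C \<subseteq> {1..} \<and>
     (\<forall>m\<in>C. \<forall>n\<in>C. m \<noteq> n \<longrightarrow> GR_edge R m n)"

definition GR_infinite_clique_number :: "rat set \<Rightarrow> bool" where
  "GR_infinite_clique_number R \<longleftrightarrow>
     (\<forall>k::nat. \<exists>C. finite C \<and> card C = k \<and> GR_clique R C)"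

definition mp_map :: "'a measure \<Rightarrow> ('a \<Rightarrow> 'a) \<Rightarrow> bool" where
  "mp_map M f \<longleftrightarrow> f \<in> measurable M M \<and>
     (\<forall>A\<in>sets M. emeasure M (f -` A \<inter> space M) = emeasure M A)"

definition mp_action :: "'a measure \<Rightarrow> (nat \<Rightarrow> 'a \<Rightarrow> 'a) \<Rightarrow> bool" where
  "mp_action M T \<longleftrightarrow>
     (\<forall>n\<ge>1. mp_map M (T n)) \<and>
     (\<forall>m\<ge>1. \<forall>n\<ge>1. T (m * n) = T m \<circ> T n)"

text \<open>R is a set of multiplicative recurrence for actions on the probability space M.
  Being a set of multiplicative recurrence means this holds for every probability space M
  (of every type).\<close>
definition mult_recurrent_on :: "rat set \<Rightarrow> 'a measure \<Rightarrow> bool" where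
  "mult_recurrent_on R M \<longleftrightarrow>
     (\<forall>T. mp_action M T \<longrightarrow>
        (\<forall>B\<in>sets M. measure M B > 0 \<longrightarrow>
           (\<exists>m n. m \<ge> 1 \<and> n \<ge> 1 \<and> of_nat m / of_nat n \<in> R \<and>
              measure M (T m -` B \<inter> T n -` B \<inter> space M) > 0)))"

end

theory Submission
  imports Defs
begin

text \<open>Every preimage \<open>T\<^sub>n\<^sup>-\<^sup>1 B\<close> has measure \<open>\<mu>(B)\<close>, so among \<open>k > 1/\<mu>(B)\<close> of them two must
  overlap in positive measure: they cannot all be almost disjoint inside a probability space.
  Taking the indices from a clique of size \<open>k\<close> in \<open>G(R)\<close>, the two overlapping preimages come
  from an edge \<open>{m, n}\<close>, i.e. \<open>m/n \<in> R\<close> or \<open>n/m \<in> R\<close>; since intersection is symmetric, either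
  orientation gives recurrence.\<close>

lemma (in prob_space) sum_prob_le_1_if_pairwise_null_inter:
  assumes "finite I" and "\<And>i. i \<in> I \<Longrightarrow> A i \<in> events"
    and "\<And>i j. i \<in> I \<Longrightarrow> j \<in> I \<Longrightarrow> i \<noteq> j \<Longrightarrow> prob (A i \<inter> A j) = 0"
  shows "(\<Sum>i\<in>I. prob (A i)) \<le> 1"
proof -
  have "pairwise (\<lambda>i j. AE x in M. x \<notin> A i \<or> x \<notin> A j) I"
    unfolding pairwise_def
  proof (intro ballI impI)
    fix i j assume ij: "i \<in> I" "j \<in> I" "i \<noteq> j"
    then have "A i \<inter> A j \<in> null_sets M"
      using assms(2,3) by (simp add: emeasure_eq_measure null_sets_def)
    then have "AE x in M. x \<notin> A i \<inter> A j" by (rule AE_not_in)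
    then show "AE x in M. x \<notin> A i \<or> x \<notin> A j" by (rule eventually_mono) auto
  qed
  then have "prob (\<Union>i\<in>I. A i) = (\<Sum>i\<in>I. prob (A i))"
    using assms(1,2) by (intro measure_UNION_AE) (auto simp: fmeasurable_def emeasure_eq_measure)
  then show ?thesis by (metis prob_le_1)
qed

lemma mp_map_vimage_sets:
  assumes "mp_map M f" and "B \<in> sets M"
  shows "f -` B \<inter> space M \<in> sets M"
  using assms unfolding mp_map_def by (auto intro: measurable_sets)

lemma mp_map_measure_vimage:
  assumes "mp_map M f" and "B \<in> sets M"
  shows "measure M (f -` B \<inter> space M) = measure M B"
  using assms unfolding mp_map_def measure_def by auto

lemma GR_clique_pos: "GR_clique R C \<Longrightarrow> n \<in> C \<Longrightarrow> n \<ge> 1"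
  unfolding GR_clique_def by auto

lemma GR_clique_edge: "GR_clique R C \<Longrightarrow> m \<in> C \<Longrightarrow> n \<in> C \<Longrightarrow> m \<noteq> n \<Longrightarrow> GR_edge R m n"
  unfolding GR_clique_def by auto

theorem lemma3p1:
  fixes R :: "rat set" and M :: "'a measure"
  assumes "R \<subseteq> {q. q > 0 \<and> q \<noteq> 1}"
    and "R \<noteq> {}"
    and "GR_infinite_clique_number R"
    and "prob_space M"
  shows "mult_recurrent_on R M"
  unfolding mult_recurrent_on_def
proof (intro allI impI ballI)
  interpret prob_space M by fact
  fix T B assume act: "mp_action M T" and B: "B \<in> sets M" and pos: "measure M B > 0"
  obtain k :: nat where "1 / measure M B < real k" using reals_Archimedean2 by blast
  then have many: "real k * measure M B > 1" using pos by (simp add: field_simps)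
  obtain C where C: "finite C" "card C = k" "GR_clique R C"
    using assms(3) unfolding GR_infinite_clique_number_def by blast
  define A where "A n = T n -` B \<inter> space M" for n
  have mp: "mp_map M (T n)" if "n \<in> C" for n
    using act GR_clique_pos[OF C(3) that] unfolding mp_action_def by auto
  have "(\<Sum>n\<in>C. prob (A n)) = real k * prob B"
    using C(2) mp_map_measure_vimage[OF mp B] by (simp add: A_def)
  then have "\<not> (\<Sum>n\<in>C. prob (A n)) \<le> 1"
    using many by simp
  then obtain m n where mn: "m \<in> C" "n \<in> C" "m \<noteq> n" and overlap: "prob (A m \<inter> A n) \<noteq> 0"
    using sum_prob_le_1_if_pairwise_null_inter[OF C(1), of A] mp_map_vimage_sets[OF mp B]
    unfolding A_def by blast
  have "prob (A m \<inter> A n) > 0"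
    using overlap measure_nonneg[of M] by (simp add: order_less_le)
  then have overlap_pos: "prob (T m -` B \<inter> T n -` B \<inter> space M) > 0"
                         "prob (T n -` B \<inter> T m -` B \<inter> space M) > 0"
    unfolding A_def by (simp_all add: Int_ac)
  have "rat_of_nat m / rat_of_nat n \<in> R \<or> rat_of_nat n / rat_of_nat m \<in> R"
    using GR_clique_edge[OF C(3) mn] unfolding GR_edge_def .
  then show "\<exists>m n. 1 \<le> m \<and> 1 \<le> n \<and> rat_of_nat m / rat_of_nat n \<in> R \<and>
              0 < measure M (T m -` B \<inter> T n -` B \<inter> space M)"
    using overlap_pos GR_clique_pos[OF C(3) mn(1)] GR_clique_pos[OF C(3) mn(2)] by blast
qed

end
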